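(* Let $k\ge 2$, let $H_0$ be a finite $k$-uniform hypergraph and let $(H_t)_{t\ge0}$ be the ILTH hypergraphs generated from $H_0$. The number of paths of length two in $H_t$ is $\Theta\left((k^2+1)^t\right)$.
   Context: A $k$-uniform hypergraph has every hyperedge a $k$-element subset of the vertex set. The ILTH process: given $H_t$, form $H_{t+1}$ by adding for each vertex $x\in V(H_t)$ a new vertex $x'$ (its clone), and taking $E(H_{t+1})=E(H_t)\cup\{(e\setminus\{x\})\cup\{x'\} : e\in E(H_t),\ x\in e\}$. A path of length two in a hypergraph is a 5-tuple $(u,e_1,v,e_2,w)$ with $u,v,w$ distinct vertices, $e_1,e_2$ distinct hyperedges, $u,v\in e_1$ and $v,w\in e_2$. Asymptotics are as $t\to\infty$ with $k$ and $H_0$ fixed. *)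

theory Defs
  imports Main "HOL-Library.Landau_Symbols"
begin

definition k_uniform_hypergraph :: "nat \<Rightarrow> 'v set \<Rightarrow> 'v set set \<Rightarrow> bool" where
  "k_uniform_hypergraph k V E \<longleftrightarrow> finite V \<and> (\<forall>e\<in>E. e \<subseteq> V \<and> card e = k)"

text \<open>Vertices of the ILTH hypergraphs are named by pairs (x, l): x a vertex of H_0 and
  l a list recording the cloning history. The clone of (x, l) created at step t is
  (x, l @ [t]), which is a fresh vertex (all lists occurring in H_t have entries < t).\<close>

definition clone :: "nat \<Rightarrow> 'a \<times> nat list \<Rightarrow> 'a \<times> nat list" where
  "clone t v = (fst v, snd v @ [t])"

fun ilth_V :: "'a set \<Rightarrow> nat \<Rightarrow> ('a \<times> nat list) set" where
  "ilth_V V0 0 = (\<lambda>x. (x, [])) ` V0"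
| "ilth_V V0 (Suc t) = ilth_V V0 t \<union> clone t ` ilth_V V0 t"

fun ilth_E :: "'a set set \<Rightarrow> nat \<Rightarrow> ('a \<times> nat list) set set" where
  "ilth_E E0 0 = (\<lambda>e. (\<lambda>x. (x, [])) ` e) ` E0"
| "ilth_E E0 (Suc t) = ilth_E E0 t \<union>
     {insert (clone t x) (e - {x}) | e x. e \<in> ilth_E E0 t \<and> x \<in> e}"

definition paths2 :: "'v set \<Rightarrow> 'v set set \<Rightarrow> ('v \<times> 'v set \<times> 'v \<times> 'v set \<times> 'v) set" where
  "paths2 V E = {(u, e1, v, e2, w). u \<in> V \<and> v \<in> V \<and> w \<in> V \<and>
      u \<noteq> v \<and> v \<noteq> w \<and> u \<noteq> w \<and> e1 \<in> E \<and> e2 \<in> E \<and> e1 \<noteq> e2 \<and>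
      u \<in> e1 \<and> v \<in> e1 \<and> v \<in> e2 \<and> w \<in> e2}"

end

theory Submission
  imports Defs
begin

(* Write deg_t v for the number of edges of H_t through v and M_j(t) for the sum of deg_t v ^ j
   over the vertices of H_t. In one ILTH step an old vertex v keeps its old edges and lies in the
   k - 1 new edges obtained from each of them by cloning one of its other vertices, so its degree
   is multiplied by k, while its clone inherits the degree of v. Hence M_j(t + 1) = (k^j + 1) M_j(t).
   Counting paths of length two by their middle vertex gives M_2(t) - M_1(t) <= P(t) <= k^2 M_2(t),
   and M_1(t) grows only like (k + 1)^t, which is o((k^2 + 1)^t). *)

definition hdegree :: "'v set set \<Rightarrow> 'v \<Rightarrow> nat" where
  "hdegree E v = card {e \<in> E. v \<in> e}"

definition degree_moment :: "nat \<Rightarrow> 'v set \<Rightarrow> 'v set set \<Rightarrow> nat" where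
  "degree_moment j V E = (\<Sum>v\<in>V. hdegree E v ^ j)"

lemma k_uniform_hypergraph_finite_edges:
  assumes "k_uniform_hypergraph k V E"
  shows "finite E"
  using assms unfolding k_uniform_hypergraph_def
  by (meson PowI finite_Pow_iff finite_subset subsetI)

lemma k_uniform_hypergraph_finite_edge:
  assumes "k_uniform_hypergraph k V E" "e \<in> E"
  shows "finite e"
  using assms unfolding k_uniform_hypergraph_def by (meson finite_subset)

lemma degree_moment_pos:
  assumes "k_uniform_hypergraph k V E" "k \<ge> 1" "E \<noteq> {}"
  shows "degree_moment j V E > 0"
proof -
  obtain e where e: "e \<in> E" using assms(3) by blast
  then have "card e \<ge> 1" using assms(1,2) by (simp add: k_uniform_hypergraph_def)
  then obtain v where v: "v \<in> e" by fastforce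
  then have "v \<in> V" using e assms(1) by (auto simp: k_uniform_hypergraph_def)
  have "hdegree E v > 0"
    unfolding hdegree_def using e v k_uniform_hypergraph_finite_edges[OF assms(1)]
    by (auto simp: card_gt_0_iff)
  then show ?thesis
    unfolding degree_moment_def using \<open>v \<in> V\<close> assms(1)
    by (intro sum_pos2[of V v]) (auto simp: k_uniform_hypergraph_def)
qed

lemma degree_moment_mono:
  assumes "0 < i" "i \<le> j"
  shows "degree_moment i V E \<le> degree_moment j V E"
  unfolding degree_moment_def
proof (rule sum_mono)
  fix v
  show "hdegree E v ^ i \<le> hdegree E v ^ j"
    using assms by (cases "hdegree E v") (auto simp: power_0_left intro: power_increasing)
qed

lemma card_paths2_le:
  assumes "k_uniform_hypergraph k V E"
  shows "card (paths2 V E) \<le> k ^ 2 * degree_moment 2 V E"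
proof -
  define I where "I v = (SIGMA e:{e \<in> E. v \<in> e}. e)" for v
  have fin_E: "finite E" using k_uniform_hypergraph_finite_edges[OF assms] .
  have fin_V: "finite V" using assms by (simp add: k_uniform_hypergraph_def)
  have fin_I: "finite (I v)" for v
    unfolding I_def using fin_E k_uniform_hypergraph_finite_edge[OF assms] by auto
  have card_I: "card (I v) = k * hdegree E v" for v
  proof -
    have "card (I v) = (\<Sum>e\<in>{e \<in> E. v \<in> e}. card e)"
      unfolding I_def using fin_E k_uniform_hypergraph_finite_edge[OF assms]
      by (intro card_SigmaI) auto
    also have "\<dots> = (\<Sum>e\<in>{e \<in> E. v \<in> e}. k)"
      using assms by (intro sum.cong) (auto simp: k_uniform_hypergraph_def)
    finally show ?thesis by (simp add: hdegree_def)
  qed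
  have "inj_on (\<lambda>(u, e1, v, e2, w). (v, (e1, u), (e2, w))) (paths2 V E)"
    by (auto simp: inj_on_def)
  moreover have "(\<lambda>(u, e1, v, e2, w). (v, (e1, u), (e2, w))) ` paths2 V E
      \<subseteq> (SIGMA v:V. I v \<times> I v)"
    by (auto simp: paths2_def I_def)
  ultimately have "card (paths2 V E) \<le> card (SIGMA v:V. I v \<times> I v)"
    using fin_V fin_I by (intro card_inj_on_le) auto
  also have "\<dots> = (\<Sum>v\<in>V. (k * hdegree E v) ^ 2)"
    using fin_V fin_I by (simp add: card_cartesian_product card_I power2_eq_square)
  also have "\<dots> = k ^ 2 * degree_moment 2 V E"
    by (simp add: degree_moment_def power_mult_distrib sum_distrib_left)
  finally show ?thesis .
qed

lemma card_paths2_ge: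
  assumes "k_uniform_hypergraph k V E" "k \<ge> 2"
  shows "degree_moment 2 V E \<le> card (paths2 V E) + degree_moment 1 V E"
proof -
  define Q where "Q = (SIGMA v:V. SIGMA e1:{e \<in> E. v \<in> e}. {e \<in> E. v \<in> e} - {e1})"
  have fin_E: "finite E" using k_uniform_hypergraph_finite_edges[OF assms(1)] .
  have fin_V: "finite V" using assms(1) by (simp add: k_uniform_hypergraph_def)
  have fin_paths: "finite (paths2 V E)"
    by (rule finite_subset[of _ "V \<times> E \<times> V \<times> E \<times> V"]) (auto simp: paths2_def fin_V fin_E)
  have "Q \<subseteq> (\<lambda>(u, e1, v, e2, w). (v, e1, e2)) ` paths2 V E"
  proof clarify
    fix v e1 e2 assume "(v, e1, e2) \<in> Q"
    then have v: "v \<in> V" "v \<in> e1" "v \<in> e2" and e: "e1 \<in> E" "e2 \<in> E" "e1 \<noteq> e2"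
      by (auto simp: Q_def)
    have e_props: "card e1 = k" "card e2 = k" "e1 \<subseteq> V" "e2 \<subseteq> V"
      using e assms(1) by (auto simp: k_uniform_hypergraph_def)
    have "\<not> e1 \<subseteq> e2"
      using e_props e k_uniform_hypergraph_finite_edge[OF assms(1)] card_subset_eq by metis
    then obtain u where u: "u \<in> e1" "u \<notin> e2" by blast
    have "card (e2 - {v}) > 0" using e_props v assms(2) by simp
    then obtain w where w: "w \<in> e2" "w \<noteq> v" by (auto simp: card_gt_0_iff)
    have "(u, e1, v, e2, w) \<in> paths2 V E"
      using u v w e e_props by (auto simp: paths2_def)
    then show "(v, e1, e2) \<in> (\<lambda>(u, e1, v, e2, w). (v, e1, e2)) ` paths2 V E"
      by force
  qed
  then have "card Q \<le> card (paths2 V E)"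
    using fin_paths by (meson card_image_le card_mono finite_imageI le_trans)
  moreover have "card Q = (\<Sum>v\<in>V. hdegree E v * (hdegree E v - 1))"
    using fin_V fin_E by (simp add: Q_def hdegree_def)
  moreover have "(\<Sum>v\<in>V. hdegree E v * (hdegree E v - 1)) + degree_moment 1 V E
      = degree_moment 2 V E"
    unfolding degree_moment_def sum.distrib[symmetric]
    by (intro sum.cong) (auto simp: power2_eq_square diff_mult_distrib2)
  ultimately show ?thesis by linarith
qed

definition clone_edges :: "('v \<Rightarrow> 'v) \<Rightarrow> 'v set set \<Rightarrow> 'v set set" where
  "clone_edges c E = {insert (c x) (e - {x}) | e x. e \<in> E \<and> x \<in> e}"

locale fresh_cloning =
  fixes k :: nat and V :: "'v set" and E :: "'v set set" and c :: "'v \<Rightarrow> 'v"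
  assumes uniform: "k_uniform_hypergraph k V E"
    and clone_inj_on: "inj_on c V"
    and clone_fresh: "c x \<notin> V"
begin

abbreviation clone_edge :: "'v set \<Rightarrow> 'v \<Rightarrow> 'v set" where
  "clone_edge e x \<equiv> insert (c x) (e - {x})"

lemma finite_V: "finite V"
  using uniform by (simp add: k_uniform_hypergraph_def)

lemma finite_E: "finite E"
  using k_uniform_hypergraph_finite_edges[OF uniform] .

lemma finite_edge: "e \<in> E \<Longrightarrow> finite e"
  using k_uniform_hypergraph_finite_edge[OF uniform] .

lemma edge_subset: "e \<in> E \<Longrightarrow> e \<subseteq> V"
  using uniform by (simp add: k_uniform_hypergraph_def)

lemma card_edge: "e \<in> E \<Longrightarrow> card e = k"
  using uniform by (simp add: k_uniform_hypergraph_def)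

lemma clone_notin_edge: "e \<in> E \<Longrightarrow> c x \<notin> e"
  using clone_fresh edge_subset by blast

lemma clone_edge_notin: "clone_edge e x \<notin> E"
  using clone_notin_edge by blast

lemma clone_edge_inj:
  assumes "e \<in> E" "x \<in> e" "e' \<in> E" "x' \<in> e'" and eq: "clone_edge e x = clone_edge e' x'"
  shows "e = e' \<and> x = x'"
proof -
  have V: "x \<in> V" "x' \<in> V" using assms(1-4) edge_subset by auto
  have "c x \<notin> e" "c x \<notin> e'" using assms(1,3) clone_notin_edge by auto
  then have "c x = c x'" using eq by blast
  then have "x = x'" using V clone_inj_on by (simp add: inj_on_eq_iff)
  have "e - {x} = clone_edge e x - {c x}" using \<open>c x \<notin> e\<close> by auto
  also have "\<dots> = clone_edge e' x - {c x}" using eq \<open>x = x'\<close> by simp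
  also have "\<dots> = e' - {x}" using \<open>c x \<notin> e'\<close> by auto
  finally have "e = e'"
    using assms(2,4) \<open>x = x'\<close> by (metis insert_Diff)
  with \<open>x = x'\<close> show ?thesis by simp
qed

lemma uniform_step: "k_uniform_hypergraph k (V \<union> c ` V) (E \<union> clone_edges c E)"
proof -
  have "e' \<subseteq> V \<union> c ` V \<and> card e' = k" if new: "e' \<in> E \<union> clone_edges c E" for e'
  proof -
    consider "e' \<in> E" | e x where "e \<in> E" "x \<in> e" "e' = clone_edge e x"
      using new unfolding clone_edges_def by blast
    then show ?thesis
    proof cases
      case 1
      then show ?thesis using edge_subset card_edge by auto
    next
      case 2
      then have "x \<in> V" using edge_subset by auto
      then have "c x \<notin> e" using 2 clone_notin_edge by simp
      then have "card e' = Suc (card (e - {x}))" using 2 finite_edge by simp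
      also have "\<dots> = card e" using 2 finite_edge by (intro card_Suc_Diff1) auto
      also have "\<dots> = k" using 2 card_edge by simp
      finally show ?thesis using 2 edge_subset \<open>x \<in> V\<close> by auto
    qed
  qed
  then show ?thesis using finite_V by (simp add: k_uniform_hypergraph_def)
qed

lemma edges_containing_step:
  assumes "v \<in> V"
  shows "{e \<in> E \<union> clone_edges c E. v \<in> e}
    = {e \<in> E. v \<in> e} \<union> (\<lambda>(e, x). clone_edge e x) ` (SIGMA e:{e \<in> E. v \<in> e}. e - {v})"
    (is "_ = ?A \<union> _ ` ?S")
proof (intro equalityI subsetI)
  have mem: "v \<in> clone_edge e x \<longleftrightarrow> v \<in> e \<and> v \<noteq> x" for e x
    using assms clone_fresh by auto
  fix e' assume "e' \<in> {e \<in> E \<union> clone_edges c E. v \<in> e}"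
  then consider "e' \<in> ?A" | e x where "e \<in> E" "x \<in> e" "e' = clone_edge e x" "v \<in> e'"
    unfolding clone_edges_def by blast
  then show "e' \<in> ?A \<union> (\<lambda>(e, x). clone_edge e x) ` ?S"
  proof cases
    case 2
    then have "(e, x) \<in> ?S" using mem by auto
    then show ?thesis using 2 by (auto intro: rev_image_eqI)
  qed simp
next
  fix e' assume "e' \<in> ?A \<union> (\<lambda>(e, x). clone_edge e x) ` ?S"
  then show "e' \<in> {e \<in> E \<union> clone_edges c E. v \<in> e}"
  proof
    assume "e' \<in> (\<lambda>(e, x). clone_edge e x) ` ?S"
    then obtain e x where "e \<in> E" "v \<in> e" "x \<in> e" "x \<noteq> v" "e' = clone_edge e x"
      by auto
    then show ?thesis using assms clone_fresh by (auto simp: clone_edges_def)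
  qed simp
qed

lemma edges_containing_clone:
  assumes "v \<in> V"
  shows "{e \<in> E \<union> clone_edges c E. c v \<in> e} = (\<lambda>e. clone_edge e v) ` {e \<in> E. v \<in> e}"
proof (intro equalityI subsetI)
  have mem: "c v \<in> clone_edge e x \<longleftrightarrow> x = v" if "e \<in> E" "x \<in> e" for e x
  proof -
    have "x \<in> V" using that edge_subset by auto
    then have "c v = c x \<longleftrightarrow> x = v" using assms clone_inj_on by (auto simp: inj_on_eq_iff)
    then show ?thesis using clone_notin_edge[OF that(1)] by auto
  qed
  fix e' assume "e' \<in> {e \<in> E \<union> clone_edges c E. c v \<in> e}"
  then obtain e x where "e \<in> E" "x \<in> e" "e' = clone_edge e x" "c v \<in> e'"
    unfolding clone_edges_def using clone_notin_edge by blast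
  then show "e' \<in> (\<lambda>e. clone_edge e v) ` {e \<in> E. v \<in> e}" using mem by auto
next
  fix e' assume "e' \<in> (\<lambda>e. clone_edge e v) ` {e \<in> E. v \<in> e}"
  then show "e' \<in> {e \<in> E \<union> clone_edges c E. c v \<in> e}"
    by (auto simp: clone_edges_def)
qed

lemma hdegree_step:
  assumes "v \<in> V"
  shows "hdegree (E \<union> clone_edges c E) v = k * hdegree E v"
proof -
  define A where "A = {e \<in> E. v \<in> e}"
  define S where "S = (SIGMA e:A. e - {v})"
  have fin_A: "finite A" using finite_E by (simp add: A_def)
  have fin_S: "finite S" using fin_A finite_edge by (auto simp: A_def S_def)
  have disj: "A \<inter> (\<lambda>(e, x). clone_edge e x) ` S = {}"
    using clone_edge_notin by (auto simp: A_def)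
  have inj: "inj_on (\<lambda>(e, x). clone_edge e x) S"
    using clone_edge_inj by (auto simp: inj_on_def A_def S_def)
  have "hdegree (E \<union> clone_edges c E) v = card A + card S"
    unfolding hdegree_def edges_containing_step[OF assms] A_def[symmetric] S_def[symmetric]
    using fin_A fin_S disj inj by (simp add: card_Un_disjoint card_image)
  also have "card S = (\<Sum>e\<in>A. card (e - {v}))"
    unfolding S_def using fin_A finite_edge by (intro card_SigmaI) (auto simp: A_def)
  also have "card A + \<dots> = (\<Sum>e\<in>A. card (e - {v}) + 1)"
    by (subst sum.distrib) simp
  also have "\<dots> = (\<Sum>e\<in>A. card e)"
  proof (rule sum.cong)
    fix e assume "e \<in> A"
    then have "Suc (card (e - {v})) = card e"
      using finite_edge by (intro card_Suc_Diff1) (auto simp: A_def)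
    then show "card (e - {v}) + 1 = card e" by linarith
  qed simp
  also have "\<dots> = (\<Sum>e\<in>A. k)" using card_edge by (simp add: A_def)
  finally show ?thesis by (simp add: hdegree_def A_def)
qed

lemma hdegree_step_clone:
  assumes "v \<in> V"
  shows "hdegree (E \<union> clone_edges c E) (c v) = hdegree E v"
proof -
  have "inj_on (\<lambda>e. clone_edge e v) {e \<in> E. v \<in> e}"
    using clone_edge_inj by (auto simp: inj_on_def)
  then show ?thesis
    unfolding hdegree_def edges_containing_clone[OF assms] by (simp add: card_image)
qed

lemma degree_moment_step:
  "degree_moment j (V \<union> c ` V) (E \<union> clone_edges c E) = (k ^ j + 1) * degree_moment j V E"
proof -
  let ?E' = "E \<union> clone_edges c E"
  have "V \<inter> c ` V = {}" using clone_fresh by blast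
  then have "degree_moment j (V \<union> c ` V) ?E'
      = (\<Sum>v\<in>V. hdegree ?E' v ^ j) + (\<Sum>v\<in>c ` V. hdegree ?E' v ^ j)"
    unfolding degree_moment_def using finite_V by (simp add: sum.union_disjoint)
  also have "(\<Sum>v\<in>c ` V. hdegree ?E' v ^ j) = (\<Sum>v\<in>V. hdegree ?E' (c v) ^ j)"
    using clone_inj_on by (simp add: sum.reindex)
  finally show ?thesis
    by (simp add: hdegree_step hdegree_step_clone degree_moment_def sum.distrib
        sum_distrib_left algebra_simps)
qed

end

lemma inj_clone: "inj (clone t)"
  by (auto simp: inj_def clone_def prod_eq_iff)

lemma ilth_V_history_less: "v \<in> ilth_V V0 t \<Longrightarrow> i \<in> set (snd v) \<Longrightarrow> i < t"
  by (induction t arbitrary: v) (auto simp: clone_def less_Suc_eq)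

lemma clone_notin_ilth_V: "clone t x \<notin> ilth_V V0 t"
  using ilth_V_history_less[of "clone t x" V0 t t] by (auto simp: clone_def)

lemma ilth_E_Suc: "ilth_E E0 (Suc t) = ilth_E E0 t \<union> clone_edges (clone t) (ilth_E E0 t)"
  by (simp add: clone_edges_def)

lemma ilth_fresh_cloning:
  assumes "k_uniform_hypergraph k V0 E0"
  shows "fresh_cloning k (ilth_V V0 t) (ilth_E E0 t) (clone t)"
proof (rule fresh_cloning.intro)
  show "k_uniform_hypergraph k (ilth_V V0 t) (ilth_E E0 t)"
  proof (induction t)
    case 0
    show ?case using assms by (auto simp: k_uniform_hypergraph_def card_image inj_on_def)
  next
    case (Suc t)
    have "fresh_cloning k (ilth_V V0 t) (ilth_E E0 t) (clone t)"
      using Suc inj_on_subset[OF inj_clone subset_UNIV] clone_notin_ilth_V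
      by (rule fresh_cloning.intro)
    then show ?case
      unfolding ilth_V.simps(2) ilth_E_Suc by (rule fresh_cloning.uniform_step)
  qed
qed (rule inj_on_subset[OF inj_clone subset_UNIV], rule clone_notin_ilth_V)

lemma ilth_k_uniform:
  "k_uniform_hypergraph k V0 E0 \<Longrightarrow> k_uniform_hypergraph k (ilth_V V0 t) (ilth_E E0 t)"
  using fresh_cloning.uniform[OF ilth_fresh_cloning] .

lemma ilth_degree_moment:
  assumes "k_uniform_hypergraph k V0 E0"
  shows "degree_moment j (ilth_V V0 t) (ilth_E E0 t)
           = (k ^ j + 1) ^ t * degree_moment j (ilth_V V0 0) (ilth_E E0 0)"
proof (induction t)
  case (Suc t)
  have "degree_moment j (ilth_V V0 (Suc t)) (ilth_E E0 (Suc t))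
      = (k ^ j + 1) * degree_moment j (ilth_V V0 t) (ilth_E E0 t)"
    unfolding ilth_V.simps(2) ilth_E_Suc
    by (rule fresh_cloning.degree_moment_step[OF ilth_fresh_cloning[OF assms]])
  with Suc show ?case by (simp del: ilth_V.simps ilth_E.simps add: algebra_simps)
qed simp

lemma ilth_card_paths2_bounds:
  assumes "k \<ge> 2" "k_uniform_hypergraph k V0 E0"
  defines "m j \<equiv> degree_moment j (ilth_V V0 0) (ilth_E E0 0)"
  shows "card (paths2 (ilth_V V0 t) (ilth_E E0 t)) \<le> k ^ 2 * m 2 * (k ^ 2 + 1) ^ t"
    and "m 2 * (k ^ 2 + 1) ^ t \<le> card (paths2 (ilth_V V0 t) (ilth_E E0 t)) + m 2 * (k + 1) ^ t"
proof -
  let ?P = "card (paths2 (ilth_V V0 t) (ilth_E E0 t))"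
  note uniform = ilth_k_uniform[OF assms(2), of t]
  have moment: "degree_moment j (ilth_V V0 t) (ilth_E E0 t) = (k ^ j + 1) ^ t * m j" for j
    unfolding m_def by (rule ilth_degree_moment[OF assms(2)])
  show "?P \<le> k ^ 2 * m 2 * (k ^ 2 + 1) ^ t"
    using card_paths2_le[OF uniform] unfolding moment by (simp add: mult_ac)
  have "m 2 * (k ^ 2 + 1) ^ t \<le> ?P + m 1 * (k + 1) ^ t"
    using card_paths2_ge[OF uniform assms(1)] unfolding moment by (simp add: mult_ac)
  also have "m 1 \<le> m 2" unfolding m_def by (rule degree_moment_mono) auto
  then have "?P + m 1 * (k + 1) ^ t \<le> ?P + m 2 * (k + 1) ^ t" by simp
  finally show "m 2 * (k ^ 2 + 1) ^ t \<le> ?P + m 2 * (k + 1) ^ t" .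
qed

lemma bigtheta_power_sandwich:
  fixes f :: "nat \<Rightarrow> real" and a b c C :: real
  assumes "0 \<le> b" "b < a" "0 < c"
    and upper: "\<And>t. f t \<le> C * a ^ t"
    and lower: "\<And>t. c * a ^ t \<le> f t + c * b ^ t"
  shows "f \<in> \<Theta>(\<lambda>t. a ^ t)"
proof -
  have a_pos: "0 < a" using assms(1,2) by linarith
  have f_nonneg: "0 \<le> f t" for t
  proof -
    have "c * b ^ t \<le> c * a ^ t"
      using assms(1-3) by (intro mult_left_mono power_mono) auto
    then show ?thesis using lower[of t] by linarith
  qed
  have "eventually (\<lambda>t. (b / a) ^ t < 1 / 2) at_top"
    using assms(1,2) a_pos by (intro order_tendstoD(2)[OF LIMSEQ_power_zero]) auto
  then have half: "eventually (\<lambda>t. c / 2 * a ^ t \<le> f t) at_top"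
  proof eventually_elim
    case (elim t)
    then have "b ^ t \<le> a ^ t / 2"
      using a_pos by (simp add: divide_simps)
    then have "c * b ^ t \<le> c / 2 * a ^ t"
      using assms(3) mult_left_mono[of "b ^ t" "a ^ t / 2" c] by simp
    then show ?case using lower[of t] by linarith
  qed
  show ?thesis
  proof
    show "f \<in> O(\<lambda>t. a ^ t)"
      using upper f_nonneg a_pos by (intro bigoI[of _ C] always_eventually) simp
    show "f \<in> \<Omega>(\<lambda>t. a ^ t)"
      using half f_nonneg a_pos assms(3)
      by (intro landau_omega.bigI[of "c / 2"]) (auto elim!: eventually_mono)
  qed
qed

theorem lemma4p5:
  fixes k :: nat and V0 :: "'a set" and E0 :: "'a set set"
  assumes "k \<ge> 2"
    and "k_uniform_hypergraph k V0 E0"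
    and "E0 \<noteq> {}"
  shows "(\<lambda>t. real (card (paths2 (ilth_V V0 t) (ilth_E E0 t))))
           \<in> \<Theta>(\<lambda>t. real (k ^ 2 + 1) ^ t)"
proof (rule bigtheta_power_sandwich)
  let ?P = "\<lambda>t. card (paths2 (ilth_V V0 t) (ilth_E E0 t))"
  define m where "m = degree_moment 2 (ilth_V V0 0) (ilth_E E0 0)"
  note bounds = ilth_card_paths2_bounds[OF assms(1,2), folded m_def]
  show "real (?P t) \<le> real (k ^ 2 * m) * real (k ^ 2 + 1) ^ t" for t
    using of_nat_mono[OF bounds(1)] by simp
  show "real m * real (k ^ 2 + 1) ^ t \<le> real (?P t) + real m * real (k + 1) ^ t" for t
    using of_nat_mono[OF bounds(2)] by simp
  have "0 < m"
    unfolding m_def using assms by (intro degree_moment_pos ilth_k_uniform) auto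
  then show "0 < real m" by simp
  show "real (k + 1) < real (k ^ 2 + 1)"
    using assms(1) by (simp add: power2_eq_square)
qed simp

end
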